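(* Let $\Lambda$ be a row-finite $k$-graph with no sources, $S$ a semigroup, $\eta:\Lambda\to S$ a functor and $\Lambda\times_\eta S$ the associated skew product graph. If $\Lambda\times_\eta S$ is cofinal then $\Lambda$ is cofinal.
   Context: All semigroups are countable, cancellative, with identity. A $k$-graph is a countable category $\Lambda$ with a functor $d:\Lambda\to\mathbb{N}^k$ with unique factorisation; $\Lambda^n=d^{-1}(n)$, $\Lambda^0$ = vertices, $uXv=\{\lambda\in X:r(\lambda)=u,s(\lambda)=v\}$; row-finite: $v\Lambda^n$ finite; no sources: $v\Lambda^n\ne\emptyset$ for $n\ne0$. The skew product $\Lambda\times_\eta S$ has vertices $\Lambda^0\times S$, morphisms $\Lambda\times S$, $r(\lambda,t)=(r(\lambda),t)$, $s(\lambda,t)=(s(\lambda),t\eta(\lambda))$, $(\lambda,t)(\mu,t\eta(\lambda))=(\lambda\mu,t)$, $d(\lambda,t)=d(\lambda)$. A $k$-graph $\Gamma$ is cofinal if for all $v,w\in\Gamma^0$ there is $N\in\mathbb{N}^k$ with $v\Gamma s(\alpha)\ne\emptyset$ for every $\alpha\in w\Gamma^N$. *)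

theory Defs
  imports "HOL-Algebra.Group" "HOL-Library.Countable_Set"
begin

text \<open>Vertices (objects) are identified with
  their identity morphisms; composition kg_comp l m is the paper's l m,
  defined when kg_s l = kg_r m.  Degrees lie in N^k, represented as functions
  nat => nat vanishing outside {..<k}.\<close>

record 'a kgraph =
  kg_mor  :: "'a set"
  kg_r    :: "'a \<Rightarrow> 'a"
  kg_s    :: "'a \<Rightarrow> 'a"
  kg_comp :: "'a \<Rightarrow> 'a \<Rightarrow> 'a"
  kg_d    :: "'a \<Rightarrow> nat \<Rightarrow> nat"

definition NK :: "nat \<Rightarrow> (nat \<Rightarrow> nat) set" where
  "NK k = {n. \<forall>i\<ge>k. n i = 0}"

definition vadd :: "(nat \<Rightarrow> nat) \<Rightarrow> (nat \<Rightarrow> nat) \<Rightarrow> nat \<Rightarrow> nat" where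
  "vadd m n = (\<lambda>i. m i + n i)"

definition kg_vertices :: "'a kgraph \<Rightarrow> 'a set" where
  "kg_vertices G = {v \<in> kg_mor G. kg_r G v = v}"

definition is_category :: "'a kgraph \<Rightarrow> bool" where
  "is_category G \<longleftrightarrow>
     (\<forall>l\<in>kg_mor G. kg_r G l \<in> kg_mor G \<and> kg_s G l \<in> kg_mor G
        \<and> kg_r G (kg_r G l) = kg_r G l \<and> kg_s G (kg_r G l) = kg_r G l
        \<and> kg_r G (kg_s G l) = kg_s G l \<and> kg_s G (kg_s G l) = kg_s G l
        \<and> kg_comp G (kg_r G l) l = l \<and> kg_comp G l (kg_s G l) = l)
   \<and> (\<forall>l\<in>kg_mor G. \<forall>m\<in>kg_mor G. kg_s G l = kg_r G m \<longrightarrow>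
        kg_comp G l m \<in> kg_mor G \<and> kg_r G (kg_comp G l m) = kg_r G l
        \<and> kg_s G (kg_comp G l m) = kg_s G m)
   \<and> (\<forall>l\<in>kg_mor G. \<forall>m\<in>kg_mor G. \<forall>n\<in>kg_mor G.
        kg_s G l = kg_r G m \<longrightarrow> kg_s G m = kg_r G n \<longrightarrow>
        kg_comp G (kg_comp G l m) n = kg_comp G l (kg_comp G m n))"

definition is_kgraph :: "nat \<Rightarrow> 'a kgraph \<Rightarrow> bool" where
  "is_kgraph k G \<longleftrightarrow>
     is_category G \<and> countable (kg_mor G)
   \<and> (\<forall>l\<in>kg_mor G. kg_d G l \<in> NK k)
   \<and> (\<forall>v\<in>kg_vertices G. kg_d G v = (\<lambda>i. 0))
   \<and> (\<forall>l\<in>kg_mor G. \<forall>m\<in>kg_mor G. kg_s G l = kg_r G m \<longrightarrow>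
        kg_d G (kg_comp G l m) = vadd (kg_d G l) (kg_d G m))
   \<and> (\<forall>l\<in>kg_mor G. \<forall>m\<in>NK k. \<forall>n\<in>NK k. kg_d G l = vadd m n \<longrightarrow>
        (\<exists>!p. fst p \<in> kg_mor G \<and> snd p \<in> kg_mor G
              \<and> kg_s G (fst p) = kg_r G (snd p)
              \<and> kg_comp G (fst p) (snd p) = l
              \<and> kg_d G (fst p) = m \<and> kg_d G (snd p) = n))"

definition row_finite :: "nat \<Rightarrow> 'a kgraph \<Rightarrow> bool" where
  "row_finite k G \<longleftrightarrow> (\<forall>v\<in>kg_vertices G. \<forall>n\<in>NK k.
     finite {l\<in>kg_mor G. kg_r G l = v \<and> kg_d G l = n})"

definition no_sources :: "nat \<Rightarrow> 'a kgraph \<Rightarrow> bool" where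
  "no_sources k G \<longleftrightarrow> (\<forall>v\<in>kg_vertices G. \<forall>n\<in>NK k.
     {l\<in>kg_mor G. kg_r G l = v \<and> kg_d G l = n} \<noteq> {})"

definition cofinal :: "nat \<Rightarrow> 'a kgraph \<Rightarrow> bool" where
  "cofinal k G \<longleftrightarrow> (\<forall>v\<in>kg_vertices G. \<forall>w\<in>kg_vertices G. \<exists>N\<in>NK k.
     \<forall>a\<in>kg_mor G. kg_r G a = w \<and> kg_d G a = N \<longrightarrow>
       (\<exists>l\<in>kg_mor G. kg_r G l = v \<and> kg_s G l = kg_s G a))"

text \<open>Semigroups in the paper: countable, cancellative, with identity.\<close>
definition cancellative_semigroup :: "('b, 'c) monoid_scheme \<Rightarrow> bool" where
  "cancellative_semigroup S \<longleftrightarrow> monoid S \<and> countable (carrier S)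
   \<and> (\<forall>a\<in>carrier S. \<forall>b\<in>carrier S. \<forall>c\<in>carrier S.
        (a \<otimes>\<^bsub>S\<^esub> b = a \<otimes>\<^bsub>S\<^esub> c \<longrightarrow> b = c)
      \<and> (b \<otimes>\<^bsub>S\<^esub> a = c \<otimes>\<^bsub>S\<^esub> a \<longrightarrow> b = c))"

text \<open>A functor from the category G to S (viewed as a one-object category).\<close>
definition is_functor_to :: "'a kgraph \<Rightarrow> ('b, 'c) monoid_scheme \<Rightarrow> ('a \<Rightarrow> 'b) \<Rightarrow> bool" where
  "is_functor_to G S eta \<longleftrightarrow>
     (\<forall>l\<in>kg_mor G. eta l \<in> carrier S)
   \<and> (\<forall>v\<in>kg_vertices G. eta v = \<one>\<^bsub>S\<^esub>)
   \<and> (\<forall>l\<in>kg_mor G. \<forall>m\<in>kg_mor G. kg_s G l = kg_r G m \<longrightarrow>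
        eta (kg_comp G l m) = eta l \<otimes>\<^bsub>S\<^esub> eta m)"

text \<open>The skew product: vertex (v,t) is the identity morphism (v,t).\<close>
definition skew_product :: "'a kgraph \<Rightarrow> ('b, 'c) monoid_scheme \<Rightarrow> ('a \<Rightarrow> 'b) \<Rightarrow> ('a \<times> 'b) kgraph" where
  "skew_product G S eta =
     \<lparr> kg_mor = kg_mor G \<times> carrier S,
       kg_r = (\<lambda>(l, t). (kg_r G l, t)),
       kg_s = (\<lambda>(l, t). (kg_s G l, t \<otimes>\<^bsub>S\<^esub> eta l)),
       kg_comp = (\<lambda>(l, t) (m, u). (kg_comp G l m, t)),
       kg_d = (\<lambda>(l, t). kg_d G l) \<rparr>"

end

theory Submission
  imports Defs
begin

text \<open>Lift a path \<open>a\<close> of \<Lambda> from \<open>w\<close> to the path \<open>(a, 1)\<close> from \<open>(w, 1)\<close> in the skew product.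
  Cofinality there yields a path \<open>(l, t)\<close> from \<open>(v, 1)\<close> with the same source as \<open>(a, 1)\<close>; its first
  coordinate \<open>l\<close> is a path from \<open>v\<close> to \<open>s(a)\<close>.\<close>

lemma skew_product_vertices_iff:
  "(v, t) \<in> kg_vertices (skew_product G S eta) \<longleftrightarrow> v \<in> kg_vertices G \<and> t \<in> carrier S"
  by (auto simp: kg_vertices_def skew_product_def)

lemma skew_product_common_source_project:
  assumes "p \<in> kg_mor (skew_product G S eta)"
    and "kg_r (skew_product G S eta) p = (v, t)"
    and "kg_s (skew_product G S eta) p = kg_s (skew_product G S eta) (a, u)"
  shows "\<exists>l\<in>kg_mor G. kg_r G l = v \<and> kg_s G l = kg_s G a"
  using assms by (cases p) (auto simp: skew_product_def)

lemma cofinal_skew_product_imp_cofinal: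
  assumes "monoid S" and cofinal_skew: "cofinal k (skew_product G S eta)"
  shows "cofinal k G"
  unfolding cofinal_def
proof (intro ballI)
  fix v w assume v: "v \<in> kg_vertices G" and w: "w \<in> kg_vertices G"
  let ?G = "skew_product G S eta"
  have one: "\<one>\<^bsub>S\<^esub> \<in> carrier S"
    using \<open>monoid S\<close> by (rule monoid.one_closed)
  obtain N where N: "N \<in> NK k" and lift_cofinal:
    "\<forall>a\<in>kg_mor ?G. kg_r ?G a = (w, \<one>\<^bsub>S\<^esub>) \<and> kg_d ?G a = N \<longrightarrow>
       (\<exists>p\<in>kg_mor ?G. kg_r ?G p = (v, \<one>\<^bsub>S\<^esub>) \<and> kg_s ?G p = kg_s ?G a)"
  proof -
    have "(v, \<one>\<^bsub>S\<^esub>) \<in> kg_vertices ?G" "(w, \<one>\<^bsub>S\<^esub>) \<in> kg_vertices ?G"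
      using v w one by (simp_all add: skew_product_vertices_iff)
    then show ?thesis
      using cofinal_skew that unfolding cofinal_def by blast
  qed
  show "\<exists>N\<in>NK k. \<forall>a\<in>kg_mor G. kg_r G a = w \<and> kg_d G a = N \<longrightarrow>
          (\<exists>l\<in>kg_mor G. kg_r G l = v \<and> kg_s G l = kg_s G a)"
  proof (intro bexI[OF _ N] ballI impI)
    fix a assume a: "a \<in> kg_mor G" "kg_r G a = w \<and> kg_d G a = N"
    have "(a, \<one>\<^bsub>S\<^esub>) \<in> kg_mor ?G" "kg_r ?G (a, \<one>\<^bsub>S\<^esub>) = (w, \<one>\<^bsub>S\<^esub>)"
      "kg_d ?G (a, \<one>\<^bsub>S\<^esub>) = N"
      using a one by (auto simp: skew_product_def)
    then obtain p where "p \<in> kg_mor ?G" "kg_r ?G p = (v, \<one>\<^bsub>S\<^esub>)"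
      "kg_s ?G p = kg_s ?G (a, \<one>\<^bsub>S\<^esub>)"
      using lift_cofinal by blast
    then show "\<exists>l\<in>kg_mor G. kg_r G l = v \<and> kg_s G l = kg_s G a"
      by (rule skew_product_common_source_project)
  qed
qed

theorem corollary4p8:
  fixes k :: nat and Lam :: "'a kgraph" and S :: "('b, 'c) monoid_scheme"
    and eta :: "'a \<Rightarrow> 'b"
  assumes "is_kgraph k Lam"
    and "row_finite k Lam"
    and "no_sources k Lam"
    and "cancellative_semigroup S"
    and "is_functor_to Lam S eta"
    and "cofinal k (skew_product Lam S eta)"
  shows "cofinal k Lam"
proof -
  have "monoid S"
    using \<open>cancellative_semigroup S\<close> by (simp add: cancellative_semigroup_def)
  then show ?thesis
    using \<open>cofinal k (skew_product Lam S eta)\<close> by (rule cofinal_skew_product_imp_cofinal)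
qed

end
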